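(* Let $F\in\mathbb{C}[x]$ have degree $n\ge 2$ and roots $z_1,\ldots,z_n$ (with multiplicity), let $0\le k\le n$, $K\ge 1$, and let $c_1,c_2$ satisfy \[ c_2\cdot n\cdot \ln\!\Big(\frac{1+2K}{2K}\Big)\ge c_1\cdot n\ge\frac{\max(1,k)}{\ln(1+\frac{1}{8K})}. \] Let $\Delta=\Delta(m,r)$ be $(1,\,4c_2\max(1,k)n^3)$-isolating for the roots $z_1,\ldots,z_k$. Then $F^{(k)}(z)\ne0$ for all $z\in c_2n^2\cdot\Delta$, and \[ \sum_{i=k+1}^n\left|\frac{F^{(i)}(m)(c_1nr)^{i-k}k!}{F^{(k)}(m)\,i!}\right|<\frac{1}{2K}. \]
   Context: $\Delta(m,r)$ is the open disk with center $m$ and radius $r>0$; $\lambda\cdot\Delta(m,r):=\Delta(m,\lambda r)$. For $0<\rho_1\le1\le\rho_2$, a disk $\Delta$ is $(\rho_1,\rho_2)$-isolating for a set $S$ of roots (with multiplicity) if $\rho_1\cdot\Delta$ contains exactly the roots in $S$ and $\rho_2\cdot\Delta\setminus\rho_1\cdot\Delta$ contains no root of $F$. *)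

theory Defs
  imports "HOL-Analysis.Analysis" "HOL-Computational_Algebra.Polynomial" "HOL-Library.Multiset"
begin

text \<open>The open disk Delta(m,r) is ball m r; lambda * Delta(m,r) = ball m (lambda * r).\<close>

definition isolating :: "complex poly \<Rightarrow> real \<Rightarrow> real \<Rightarrow> complex \<Rightarrow> real \<Rightarrow> complex multiset \<Rightarrow> bool" where
  "isolating F \<rho>1 \<rho>2 m r S \<longleftrightarrow>
     0 < r \<and> 0 < \<rho>1 \<and> \<rho>1 \<le> 1 \<and> 1 \<le> \<rho>2 \<and>
     (\<forall>z. z \<in> ball m (\<rho>1 * r) \<longrightarrow> count S z = order z F) \<and>
     (\<forall>z. z \<notin> ball m (\<rho>1 * r) \<longrightarrow> count S z = 0) \<and>
     (\<forall>z. z \<in> ball m (\<rho>2 * r) - ball m (\<rho>1 * r) \<longrightarrow> poly F z \<noteq> 0)"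

end

theory Submission
  imports Defs
begin

text \<open>Expand F around a point c and split its roots into the k near ones and the n - k far ones:
  F(c + x) = C * A(x) * Q(x), where A is the product of the x - w_j over the near roots w_j = z_j - c
  and Q the product of the 1 - x/w_j over the far ones, so that F^(i)(c)/i! = C * [x^i](A Q).
  If the near roots lie within distance a of c and the far ones beyond b, the coefficients of A Q are
  dominated by those of (x + a)^k (1 + x/b)^(n-k). Hence [x^k](A Q) is close to 1 when k (n - k) a is
  small compared to b, so F^(k)(c) does not vanish, and the weighted sum of the higher Taylor
  coefficients is at most (1 + a/rho)^k ((1 + rho/b)^(n-k) - 1). The two constraints on c1 and c2
  are exactly what makes both factors small for rho = c1 n r.\<close>

definition coeff_majorant :: "real poly \<Rightarrow> complex poly \<Rightarrow> bool" where
  "coeff_majorant P p \<longleftrightarrow> (\<forall>i. cmod (coeff p i) \<le> coeff P i)"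

lemma coeff_majorant_nonneg: "coeff_majorant P p \<Longrightarrow> 0 \<le> coeff P i"
  unfolding coeff_majorant_def using norm_ge_zero order_trans by blast

lemma coeff_majorant_mult:
  assumes "coeff_majorant P p" "coeff_majorant Q q"
  shows "coeff_majorant (P * Q) (p * q)"
  unfolding coeff_majorant_def
proof
  fix n
  have "cmod (coeff (p * q) n) \<le> (\<Sum>i\<le>n. cmod (coeff p i * coeff q (n - i)))"
    unfolding coeff_mult by (rule norm_sum)
  also have "\<dots> \<le> (\<Sum>i\<le>n. coeff P i * coeff Q (n - i))"
    using assms unfolding coeff_majorant_def norm_mult
    by (intro sum_mono) (meson mult_mono norm_ge_zero order_trans)
  also have "\<dots> = coeff (P * Q) n" by (simp add: coeff_mult)
  finally show "cmod (coeff (p * q) n) \<le> coeff (P * Q) n" .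
qed

lemma coeff_majorant_prod:
  assumes "finite I" "\<And>i. i \<in> I \<Longrightarrow> coeff_majorant (P i) (p i)"
  shows "coeff_majorant (\<Prod>i\<in>I. P i) (\<Prod>i\<in>I. p i)"
  using assms
proof (induction I rule: finite_induct)
  case empty
  then show ?case by (simp add: coeff_majorant_def coeff_1)
qed (simp add: coeff_majorant_mult)

lemma coeff_linear_power_le:
  assumes "0 \<le> b"
  shows "coeff ([:1, b:] ^ l) t \<le> (real l * b) ^ t"
proof (cases "t \<le> l")
  case True
  have "coeff ([:1, b:] ^ l) t = real (l choose t) * b ^ t"
    using coeff_linear_poly_power[OF True, of 1 b] by simp
  also have "\<dots> \<le> real (l ^ t) * b ^ t"
    using binomial_le_pow[OF True] assms by (intro mult_right_mono) (auto simp del: of_nat_power)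
  finally show ?thesis by (simp add: power_mult_distrib)
next
  case False
  have "degree ([:1, b:] ^ l) \<le> degree [:1, b:] * l" by (rule degree_power_le)
  also have "\<dots> \<le> l" by simp
  finally have "degree ([:1, b:] ^ l) \<le> l" .
  then have "coeff ([:1, b:] ^ l) t = 0" using False by (intro coeff_eq_0) auto
  then show ?thesis using assms by simp
qed

lemma sum_coeff_le_poly:
  fixes P :: "real poly"
  assumes "\<And>i. 0 \<le> coeff P i" "0 \<le> x" "finite S"
  shows "(\<Sum>i\<in>S. coeff P i * x ^ i) \<le> poly P x"
proof -
  define N where "N = max (degree P) (if S = {} then 0 else Max S)"
  have "poly P x = (\<Sum>i\<le>N. coeff P i * x ^ i)"
    unfolding poly_altdef by (rule sum.mono_neutral_left) (auto simp: N_def coeff_eq_0)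
  moreover have "S \<subseteq> {..N}" using assms(3) by (auto simp: N_def le_max_iff_disj)
  ultimately show ?thesis
    using assms by (auto intro: sum_mono2)
qed

definition near_factor :: "(nat \<Rightarrow> complex) \<Rightarrow> nat set \<Rightarrow> complex poly" where
  "near_factor w I = (\<Prod>j\<in>I. [:- w j, 1:])"

definition far_factor :: "(nat \<Rightarrow> complex) \<Rightarrow> nat set \<Rightarrow> complex poly" where
  "far_factor w J = (\<Prod>j\<in>J. [:1, - 1 / w j:])"

lemma near_factor_majorant:
  assumes "finite I" "\<And>j. j \<in> I \<Longrightarrow> cmod (w j) \<le> a"
  shows "coeff_majorant ([:a, 1:] ^ card I) (near_factor w I)"
proof -
  have "coeff_majorant (\<Prod>j\<in>I. [:a, 1:]) (near_factor w I)"
    unfolding near_factor_def using assms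
    by (intro coeff_majorant_prod) (auto simp: coeff_majorant_def coeff_pCons split: nat.splits)
  then show ?thesis by simp
qed

lemma far_factor_majorant:
  assumes "finite J" "\<And>j. j \<in> J \<Longrightarrow> b \<le> cmod (w j)" "0 < b"
  shows "coeff_majorant ([:1, 1 / b:] ^ card J) (far_factor w J)"
proof -
  have "cmod (1 / w j) \<le> 1 / b" if "j \<in> J" for j
    using assms(2)[OF that] assms(3) by (simp add: norm_divide frac_le)
  then have "coeff_majorant (\<Prod>j\<in>J. [:1, 1 / b:]) (far_factor w J)"
    unfolding far_factor_def using assms(1)
    by (intro coeff_majorant_prod) (auto simp: coeff_majorant_def coeff_pCons split: nat.splits)
  then show ?thesis by simp
qed

lemma degree_near_factor: "finite I \<Longrightarrow> degree (near_factor w I) = card I"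
  unfolding near_factor_def by (subst degree_prod_eq_sum_degree) auto

lemma coeff_near_factor_card:
  assumes "finite I"
  shows "coeff (near_factor w I) (card I) = 1"
proof -
  have "lead_coeff (near_factor w I) = 1" by (simp add: near_factor_def lead_coeff_prod)
  then show ?thesis by (simp add: degree_near_factor assms)
qed

lemma coeff_far_factor_0: "coeff (far_factor w J) 0 = 1"
  unfolding far_factor_def poly_0_coeff_0[symmetric] poly_prod by simp

lemma norm_coeff_near_far_minus_one_le:
  assumes "finite I" "finite J"
    and "\<And>j. j \<in> I \<Longrightarrow> cmod (w j) \<le> a" "\<And>j. j \<in> J \<Longrightarrow> b \<le> cmod (w j)"
    and "0 \<le> a" "0 < b"
  shows "cmod (coeff (near_factor w I * far_factor w J) (card I) - 1)
           \<le> (1 + a * card J / b) ^ card I - 1"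
proof -
  let ?k = "card I" and ?l = "card J" and ?A = "near_factor w I" and ?Q = "far_factor w J"
  have A: "coeff_majorant ([:a, 1:] ^ ?k) ?A" by (rule near_factor_majorant) (use assms in auto)
  have Q: "coeff_majorant ([:1, 1 / b:] ^ ?l) ?Q" by (rule far_factor_majorant) (use assms in auto)
  have "coeff (?A * ?Q) ?k = (\<Sum>s<?k. coeff ?A s * coeff ?Q (?k - s)) + 1"
    by (simp add: coeff_mult atMost_Suc lessThan_Suc_atMost[symmetric] coeff_far_factor_0
        coeff_near_factor_card assms)
  then have "cmod (coeff (?A * ?Q) ?k - 1) \<le> (\<Sum>s<?k. cmod (coeff ?A s * coeff ?Q (?k - s)))"
    by (simp add: norm_sum)
  also have "\<dots> \<le> (\<Sum>s<?k. real (?k choose s) * a ^ (?k - s) * (real ?l * (1 / b)) ^ (?k - s))"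
  proof (rule sum_mono)
    fix s assume "s \<in> {..<?k}"
    then have "coeff ([:a, 1:] ^ ?k) s = real (?k choose s) * a ^ (?k - s)"
      using coeff_linear_poly_power[of s ?k a 1] by simp
    moreover have "coeff ([:1, 1 / b:] ^ ?l) (?k - s) \<le> (real ?l * (1 / b)) ^ (?k - s)"
      by (rule coeff_linear_power_le) (use \<open>0 < b\<close> in simp)
    ultimately show "cmod (coeff ?A s * coeff ?Q (?k - s))
        \<le> real (?k choose s) * a ^ (?k - s) * (real ?l * (1 / b)) ^ (?k - s)"
      using A Q unfolding coeff_majorant_def norm_mult
      by (metis (no_types, lifting) mult_mono norm_ge_zero order_trans)
  qed
  also have "\<dots> = (\<Sum>s<?k. real (?k choose s) * 1 ^ s * (a * ?l / b) ^ (?k - s))"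
    by (simp add: power_mult_distrib[symmetric] mult.assoc)
  also have "\<dots> = (1 + a * ?l / b) ^ ?k - 1"
    by (simp add: binomial_ring[of 1 "a * ?l / b"] atMost_Suc lessThan_Suc_atMost[symmetric])
  finally show ?thesis .
qed

lemma sum_norm_coeff_near_far_le:
  assumes "finite I" "finite J"
    and "\<And>j. j \<in> I \<Longrightarrow> cmod (w j) \<le> a" "\<And>j. j \<in> J \<Longrightarrow> b \<le> cmod (w j)"
    and "0 \<le> a" "0 < b" "0 < \<rho>"
  shows "(\<Sum>i = card I + 1..N. cmod (coeff (near_factor w I * far_factor w J) i) * \<rho> ^ (i - card I))
           \<le> (1 + a / \<rho>) ^ card I * ((1 + \<rho> / b) ^ card J - 1)"
proof -
  let ?k = "card I" and ?A = "near_factor w I" and ?Q = "far_factor w J"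
  let ?M = "[:a, 1:] ^ ?k * ([:1, 1 / b:] ^ card J - 1)"
  have A: "coeff_majorant ([:a, 1:] ^ ?k) ?A" by (rule near_factor_majorant) (use assms in auto)
  have "coeff ([:1, 1 / b:] ^ card J) 0 = 1" by (simp flip: poly_0_coeff_0)
  then have Q: "coeff_majorant ([:1, 1 / b:] ^ card J - 1) (?Q - 1)"
    using far_factor_majorant[of J b w] assms coeff_far_factor_0[of w J]
    by (auto simp: coeff_majorant_def coeff_1)
  have M: "coeff_majorant ?M (?A * (?Q - 1))" by (rule coeff_majorant_mult[OF A Q])
  \<comment> \<open>above degree k the factor A contributes nothing, so A Q and A (Q - 1) agree there\<close>
  have "(\<Sum>i = ?k + 1..N. cmod (coeff (?A * ?Q) i) * \<rho> ^ (i - ?k))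
          \<le> (\<Sum>i = ?k + 1..N. coeff ?M i * \<rho> ^ i) / \<rho> ^ ?k"
    unfolding sum_divide_distrib
  proof (rule sum_mono)
    fix i assume i: "i \<in> {?k + 1..N}"
    have "coeff ?A i = 0" using i by (intro coeff_eq_0) (auto simp: degree_near_factor assms)
    then have "coeff (?A * ?Q) i = coeff (?A * (?Q - 1)) i" by (simp add: algebra_simps)
    then have "cmod (coeff (?A * ?Q) i) \<le> coeff ?M i" using M unfolding coeff_majorant_def by simp
    moreover have "\<rho> ^ (i - ?k) = \<rho> ^ i / \<rho> ^ ?k" using i \<open>0 < \<rho>\<close> by (simp add: power_diff)
    ultimately show "cmod (coeff (?A * ?Q) i) * \<rho> ^ (i - ?k) \<le> coeff ?M i * \<rho> ^ i / \<rho> ^ ?k"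
      using \<open>0 < \<rho>\<close> by (simp add: divide_right_mono mult_right_mono)
  qed
  also have "\<dots> \<le> poly ?M \<rho> / \<rho> ^ ?k"
    using coeff_majorant_nonneg[OF M] \<open>0 < \<rho>\<close> by (intro divide_right_mono sum_coeff_le_poly) auto
  also have "\<dots> = ((a + \<rho>) / \<rho>) ^ ?k * ((1 + \<rho> / b) ^ card J - 1)"
    by (simp add: power_divide)
  also have "(a + \<rho>) / \<rho> = 1 + a / \<rho>" using \<open>0 < \<rho>\<close> by (simp add: field_simps)
  finally show ?thesis .
qed

lemma poly_higher_pderiv_eq_coeff_pcompose:
  fixes p :: "'a :: {idom, semiring_char_0} poly"
  shows "poly ((pderiv ^^ i) p) c = fact i * coeff (pcompose p [:c, 1:]) i"
proof -
  have "(pderiv ^^ i) (pcompose p [:c, 1:]) = pcompose ((pderiv ^^ i) p) [:c, 1:]"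
    by (induction i) (simp_all add: pderiv_pcompose pderiv_pCons)
  then have "poly ((pderiv ^^ i) p) c = coeff ((pderiv ^^ i) (pcompose p [:c, 1:])) 0"
    by (simp add: poly_pcompose flip: poly_0_coeff_0)
  then show ?thesis by (simp add: coeff_higher_pderiv pochhammer_fact)
qed

lemma poly_higher_pderiv_eq_coeff_near_far:
  fixes F :: "complex poly" and zs :: "nat \<Rightarrow> complex"
  assumes roots: "F = smult (lead_coeff F) (\<Prod>i=1..n. [:- zs i, 1:])" and "F \<noteq> 0" and "k \<le> n"
    and far: "\<And>j. j \<in> {k+1..n} \<Longrightarrow> zs j \<noteq> c"
  obtains C where "C \<noteq> 0" and "\<And>i. poly ((pderiv ^^ i) F) c
    = fact i * C * coeff (near_factor (\<lambda>j. zs j - c) {1..k} * far_factor (\<lambda>j. zs j - c) {k+1..n}) i"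
proof -
  let ?w = "\<lambda>j. zs j - c"
  define C where "C = lead_coeff F * (\<Prod>j=k+1..n. - ?w j)"
  have split: "{1..n} = {1..k} \<union> {k+1..n}" using \<open>k \<le> n\<close> by auto
  have "[:- ?w j, 1:] = smult (- ?w j) [:1, - 1 / ?w j:]" if "j \<in> {k+1..n}" for j
    using far[OF that] by (simp add: field_simps)
  then have "(\<Prod>j=k+1..n. [:- ?w j, 1:]) = smult (\<Prod>j=k+1..n. - ?w j) (far_factor ?w {k+1..n})"
    unfolding far_factor_def by (simp add: prod_smult[symmetric])
  moreover have "pcompose F [:c, 1:] = smult (lead_coeff F) (\<Prod>i=1..n. [:- ?w i, 1:])"
    by (subst roots) (simp add: pcompose_smult pcompose_prod pcompose_pCons)
  ultimately have "pcompose F [:c, 1:] = smult C (near_factor ?w {1..k} * far_factor ?w {k+1..n})"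
    unfolding C_def near_factor_def split by (simp add: prod.union_disjoint mult.assoc)
  moreover have "C \<noteq> 0"
  proof -
    have "\<forall>j\<in>{k+1..n}. - ?w j \<noteq> 0" using far by force
    then show ?thesis using \<open>F \<noteq> 0\<close> by (simp add: C_def)
  qed
  ultimately show thesis
    by (intro that) (auto simp: poly_higher_pderiv_eq_coeff_pcompose mult.assoc)
qed

lemma one_plus_power_le_exp:
  fixes y :: real
  assumes "0 \<le> y"
  shows "(1 + y) ^ k \<le> exp (real k * y)"
proof -
  have "(1 + y) ^ k \<le> exp y ^ k"
    using assms by (intro power_mono) (auto simp: add.commute exp_ge_add_one_self)
  then show ?thesis by (simp add: exp_of_nat_mult)
qed

lemma one_plus_power_minus_one_le:
  fixes y :: real
  assumes "0 \<le> y" "real k * y \<le> 1/2"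
  shows "(1 + y) ^ k - 1 \<le> 2 * (real k * y)"
  using one_plus_power_le_exp[OF assms(1), of k] exp_bound_lemma[of "real k * y"] assms by simp

lemma norm_coeff_near_far_ge:
  fixes a b :: real
  assumes "finite I" "finite J"
    and "\<And>j. j \<in> I \<Longrightarrow> cmod (w j) \<le> a" "\<And>j. j \<in> J \<Longrightarrow> b \<le> cmod (w j)"
    and "0 \<le> a" "0 < b" "2 * (card I * card J * a) \<le> b"
  shows "1 - 2 * (card I * card J * a / b) \<le> cmod (coeff (near_factor w I * far_factor w J) (card I))"
proof -
  let ?h = "coeff (near_factor w I * far_factor w J) (card I)"
  have "(1 + a * card J / b) ^ card I - 1 \<le> 2 * (card I * (a * card J / b))"
    using assms by (intro one_plus_power_minus_one_le) (auto simp: field_simps)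
  moreover have "cmod (?h - 1) \<le> (1 + a * card J / b) ^ card I - 1"
    using assms by (intro norm_coeff_near_far_minus_one_le) auto
  ultimately have "cmod (?h - 1) \<le> 2 * (card I * card J * a / b)"
    by (simp add: mult_ac)
  then show ?thesis using norm_triangle_ineq2[of 1 ?h] by (simp add: norm_minus_commute)
qed

lemma higher_pderiv_nonzero_of_separation:
  fixes F :: "complex poly" and zs :: "nat \<Rightarrow> complex"
  assumes roots: "F = smult (lead_coeff F) (\<Prod>i=1..n. [:- zs i, 1:])" and "F \<noteq> 0" and "k \<le> n"
    and near: "\<And>j. j \<in> {1..k} \<Longrightarrow> cmod (zs j - c) \<le> a"
    and far: "\<And>j. j \<in> {k+1..n} \<Longrightarrow> b \<le> cmod (zs j - c)"
    and "0 \<le> a" and sep: "2 * (real k * real (n - k) * a) < b"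
  shows "poly ((pderiv ^^ k) F) c \<noteq> 0"
proof -
  let ?w = "\<lambda>j. zs j - c"
  let ?h = "coeff (near_factor ?w {1..k} * far_factor ?w {k+1..n}) k"
  have "0 \<le> real k * real (n - k) * a" using \<open>0 \<le> a\<close> by simp
  then have "0 < b" using sep by linarith
  then have "zs j \<noteq> c" if "j \<in> {k+1..n}" for j using far[OF that] by auto
  then obtain C where "C \<noteq> 0" and C: "poly ((pderiv ^^ k) F) c = fact k * C * ?h"
    using poly_higher_pderiv_eq_coeff_near_far[OF roots \<open>F \<noteq> 0\<close> \<open>k \<le> n\<close>] by metis
  have "1 - 2 * (real k * real (n - k) * a / b) \<le> cmod ?h"
    using norm_coeff_near_far_ge[of "{1..k}" "{k+1..n}" ?w a b] near far sep \<open>0 \<le> a\<close> \<open>0 < b\<close>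
    by simp
  moreover have "2 * (real k * real (n - k) * a / b) < 1"
    using sep \<open>0 < b\<close> by (simp add: field_simps)
  ultimately have "?h \<noteq> 0" by auto
  then show ?thesis using C \<open>C \<noteq> 0\<close> by simp
qed

lemma sum_higher_pderiv_ratio_le:
  fixes F :: "complex poly" and zs :: "nat \<Rightarrow> complex"
  assumes roots: "F = smult (lead_coeff F) (\<Prod>i=1..n. [:- zs i, 1:])" and "F \<noteq> 0" and "k \<le> n"
    and near: "\<And>j. j \<in> {1..k} \<Longrightarrow> cmod (zs j - c) \<le> a"
    and far: "\<And>j. j \<in> {k+1..n} \<Longrightarrow> b \<le> cmod (zs j - c)"
    and "0 \<le> a" "0 < b" "0 < \<rho>" and sep: "4 * (real k * real (n - k) * a) \<le> b"
  shows "(\<Sum>i = k+1..n. cmod (poly ((pderiv ^^ i) F) c * complex_of_real (\<rho> ^ (i - k)) * fact k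
                              / (poly ((pderiv ^^ k) F) c * fact i)))
           \<le> 2 * ((1 + a / \<rho>) ^ k * ((1 + \<rho> / b) ^ (n - k) - 1))"
proof -
  let ?w = "\<lambda>j. zs j - c"
  define h where "h i = coeff (near_factor ?w {1..k} * far_factor ?w {k+1..n}) i" for i
  have "zs j \<noteq> c" if "j \<in> {k+1..n}" for j using far[OF that] \<open>0 < b\<close> by auto
  then obtain C where "C \<noteq> 0" and C: "\<And>i. poly ((pderiv ^^ i) F) c = fact i * C * h i"
    using poly_higher_pderiv_eq_coeff_near_far[OF roots \<open>F \<noteq> 0\<close> \<open>k \<le> n\<close>] unfolding h_def by metis
  have "1 - 2 * (real k * real (n - k) * a / b) \<le> cmod (h k)"
    using norm_coeff_near_far_ge[of "{1..k}" "{k+1..n}" ?w a b] near far sep \<open>0 \<le> a\<close> \<open>0 < b\<close>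
    by (simp add: h_def)
  moreover have "2 * (real k * real (n - k) * a / b) \<le> 1/2"
    using sep \<open>0 < b\<close> by (simp add: field_simps)
  ultimately have hk: "1/2 \<le> cmod (h k)" by linarith
  have "cmod (poly ((pderiv ^^ i) F) c * complex_of_real (\<rho> ^ (i - k)) * fact k
               / (poly ((pderiv ^^ k) F) c * fact i)) = cmod (h i) * \<rho> ^ (i - k) / cmod (h k)" for i
    using \<open>C \<noteq> 0\<close> \<open>0 < \<rho>\<close> by (simp add: C norm_divide norm_mult norm_power)
  then have "(\<Sum>i = k+1..n. cmod (poly ((pderiv ^^ i) F) c * complex_of_real (\<rho> ^ (i - k)) * fact k
                              / (poly ((pderiv ^^ k) F) c * fact i)))
          = (\<Sum>i = k+1..n. cmod (h i) * \<rho> ^ (i - k)) / cmod (h k)"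
    by (simp add: sum_divide_distrib)
  also have "\<dots> \<le> ((1 + a / \<rho>) ^ k * ((1 + \<rho> / b) ^ (n - k) - 1)) / (1/2)"
  proof (rule frac_le)
    show "(\<Sum>i = k+1..n. cmod (h i) * \<rho> ^ (i - k)) \<le> (1 + a / \<rho>) ^ k * ((1 + \<rho> / b) ^ (n - k) - 1)"
      using sum_norm_coeff_near_far_le[of "{1..k}" "{k+1..n}" ?w a b \<rho> n] near far assms(6-8)
      by (simp add: h_def)
    show "0 \<le> (1 + a / \<rho>) ^ k * ((1 + \<rho> / b) ^ (n - k) - 1)"
      using assms(6-8) by (simp add: one_le_power)
  qed (use hk in auto)
  finally show ?thesis by simp
qed

lemma count_image_mset_mset_set:
  assumes "finite A"
  shows "count (image_mset f (mset_set A)) z = card {i \<in> A. f i = z}"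
proof -
  have "count (image_mset f (mset_set A)) z = (\<Sum>i\<in>f -` {z} \<inter> A. 1)"
    unfolding count_image_mset using assms by (intro sum.cong) auto
  also have "f -` {z} \<inter> A = {i \<in> A. f i = z}" by auto
  finally show ?thesis by simp
qed

lemma card_root_indices_le_order:
  fixes F :: "complex poly" and zs :: "nat \<Rightarrow> complex"
  assumes roots: "F = smult (lead_coeff F) (\<Prod>i=1..n. [:- zs i, 1:])" and "F \<noteq> 0"
  shows "card {i \<in> {1..n}. zs i = z} \<le> order z F"
proof -
  let ?T = "{i \<in> {1..n}. zs i = z}"
  have "[:- z, 1:] ^ card ?T = (\<Prod>i\<in>?T. [:- zs i, 1:])" by simp
  also have "\<dots> dvd (\<Prod>i=1..n. [:- zs i, 1:])" by (rule prod_dvd_prod_subset) auto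
  also have "\<dots> dvd F" by (metis roots dvd_refl dvd_smult)
  finally show ?thesis using \<open>F \<noteq> 0\<close> order_divides by blast
qed

lemma isolating_near_roots:
  fixes zs :: "nat \<Rightarrow> complex"
  assumes "isolating F 1 R m r (image_mset zs (mset_set {1..k}))" and "j \<in> {1..k}"
  shows "cmod (zs j - m) < r"
proof -
  have "j \<in> {i \<in> {1..k}. zs i = zs j}" using assms(2) by simp
  then have "0 < card {i \<in> {1..k}. zs i = zs j}" by (auto simp: card_gt_0_iff)
  then have "0 < count (image_mset zs (mset_set {1..k})) (zs j)"
    by (simp only: count_image_mset_mset_set finite_atLeastAtMost)
  then have "zs j \<in> ball m r" using assms(1) unfolding isolating_def by (metis less_irrefl mult_1)
  then show ?thesis by (simp add: dist_norm norm_minus_commute)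
qed

text \<open>A root z_j with j > k cannot lie in the inner disk: there the isolating multiset counts only
  the indices up to k, whereas the order of z_j as a root of F counts j as well.\<close>

lemma isolating_far_roots:
  fixes F :: "complex poly" and zs :: "nat \<Rightarrow> complex"
  assumes roots: "F = smult (lead_coeff F) (\<Prod>i=1..n. [:- zs i, 1:])" and "F \<noteq> 0" and "k \<le> n"
    and iso: "isolating F 1 R m r (image_mset zs (mset_set {1..k}))" and j: "j \<in> {k+1..n}"
  shows "R * r \<le> cmod (zs j - m)"
proof -
  let ?z = "zs j"
  have "poly F ?z = 0"
    using j by (subst roots) (auto simp: poly_prod intro!: prod_zero)
  have "?z \<notin> ball m r"
  proof
    assume "?z \<in> ball m r"
    then have "card {i \<in> {1..k}. zs i = ?z} = order ?z F"
      using iso unfolding isolating_def by (simp add: count_image_mset_mset_set)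
    moreover have "card {i \<in> {1..k}. zs i = ?z} < card {i \<in> {1..n}. zs i = ?z}"
    proof (rule psubset_card_mono)
      have "j \<in> {i \<in> {1..n}. zs i = ?z}" "j \<notin> {i \<in> {1..k}. zs i = ?z}" using j by auto
      moreover have "{i \<in> {1..k}. zs i = ?z} \<subseteq> {i \<in> {1..n}. zs i = ?z}" using \<open>k \<le> n\<close> by auto
      ultimately show "{i \<in> {1..k}. zs i = ?z} \<subset> {i \<in> {1..n}. zs i = ?z}" by blast
    qed simp
    ultimately show False using card_root_indices_le_order[OF roots \<open>F \<noteq> 0\<close>, of ?z] by simp
  qed
  with \<open>poly F ?z = 0\<close> have "?z \<notin> ball m (R * r)"
    using iso unfolding isolating_def by auto
  then show ?thesis by (simp add: dist_norm norm_minus_commute)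
qed

lemma scaling_constants_bounds:
  fixes K K' X1 X2 :: real
  assumes "1 \<le> K" "1 \<le> K'"
    and hX2: "X1 \<le> X2 * ln ((1 + 2 * K) / (2 * K))" and hX1: "K' / ln (1 + 1 / (8 * K)) \<le> X1"
  shows "0 < X1" "K' \<le> X1 * ln (1 + 1 / (8 * K))" "2 * K * X1 \<le> X2" "16 \<le> X2"
proof -
  define L1 where "L1 = ln (1 + 1 / (8 * K))"
  define L2 where "L2 = ln ((1 + 2 * K) / (2 * K))"
  have L2_eq: "L2 = ln (1 + 1 / (2 * K))" using \<open>1 \<le> K\<close> by (simp add: L2_def field_simps)
  have "0 < L1" "L1 \<le> 1 / (8 * K)"
    using \<open>1 \<le> K\<close> ln_add_one_self_le_self[of "1 / (8 * K)"] by (auto simp: L1_def intro!: ln_gt_zero)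
  have "0 < L2" "L2 \<le> 1 / (2 * K)"
    using \<open>1 \<le> K\<close> ln_add_one_self_le_self[of "1 / (2 * K)"] by (auto simp: L2_eq intro!: ln_gt_zero)
  have K'_le: "K' \<le> X1 * L1"
    using hX1 \<open>0 < L1\<close> by (simp add: L1_def pos_divide_le_eq)
  then show "K' \<le> X1 * ln (1 + 1 / (8 * K))" by (simp add: L1_def)
  show "0 < X1" using K'_le \<open>0 < L1\<close> \<open>1 \<le> K'\<close> by (smt (verit) mult_nonpos_nonneg)
  then have "K' \<le> X1 / (8 * K)"
    using K'_le mult_left_mono[OF \<open>L1 \<le> 1 / (8 * K)\<close>, of X1] by simp
  then have X1_ge: "8 * K * K' \<le> X1" using \<open>1 \<le> K\<close> by (simp add: field_simps)
  have "X1 \<le> X2 * L2" using hX2 by (simp add: L2_def)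
  then have "0 < X2" using \<open>0 < X1\<close> \<open>0 < L2\<close> by (smt (verit) mult_nonpos_nonneg)
  then have "X1 \<le> X2 / (2 * K)"
    using \<open>X1 \<le> X2 * L2\<close> mult_left_mono[OF \<open>L2 \<le> 1 / (2 * K)\<close>, of X2] by simp
  then show X2_ge: "2 * K * X1 \<le> X2" using \<open>1 \<le> K\<close> by (simp add: field_simps)
  have "1 * 1 \<le> K * K'" using \<open>1 \<le> K\<close> \<open>1 \<le> K'\<close> by (intro mult_mono) auto
  then have "1 * 1 \<le> K * (K * K')" using \<open>1 \<le> K\<close> by (intro mult_mono) auto
  then have "16 \<le> 16 * (K * K * K')" by (simp add: mult.assoc)
  also have "\<dots> \<le> 2 * K * X1" using X1_ge \<open>1 \<le> K\<close> by (simp add: algebra_simps)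
  finally show "16 \<le> X2" using X2_ge by linarith
qed

lemma real_mult_diff_le_max_mult:
  assumes "k \<le> n"
  shows "real k * real (n - k) \<le> real (max 1 k) * real n"
  using assms by (intro mult_mono) auto

lemma higher_pderiv_nonzero_in_disk:
  fixes F :: "complex poly" and zs :: "nat \<Rightarrow> complex"
  assumes roots: "F = smult (lead_coeff F) (\<Prod>i=1..n. [:- zs i, 1:])" and "F \<noteq> 0" and "k \<le> n"
    and "2 \<le> n" "0 < r" "16 \<le> X"
    and near: "\<And>j. j \<in> {1..k} \<Longrightarrow> cmod (zs j - m) < r"
    and far: "\<And>j. j \<in> {k+1..n} \<Longrightarrow> 4 * X * real (max 1 k) * real n ^ 2 * r \<le> cmod (zs j - m)"
    and z: "cmod (z - m) < X * real n * r"
  shows "poly ((pderiv ^^ k) F) z \<noteq> 0"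
proof -
  define d where "d = cmod (z - m)"
  define N where "N = real n"
  define K' where "K' = real (max 1 k)"
  have "2 \<le> N" "1 \<le> K'" "0 \<le> d" using \<open>2 \<le> n\<close> by (auto simp: N_def K'_def d_def)
  have "2 * (real k * real (n - k) * (r + d)) \<le> 2 * (K' * N * (r + d))"
    using real_mult_diff_le_max_mult[OF \<open>k \<le> n\<close>] \<open>0 < r\<close> \<open>0 \<le> d\<close>
    by (simp add: K'_def N_def mult_right_mono)
  also have "\<dots> = 2 * K' * N * r + (2 * K' * N + 1) * d - d" by (simp add: algebra_simps)
  also have "\<dots> < 2 * K' * N * r + (2 * K' * N + 1) * (X * N * r) - d"
  proof -
    have "0 \<le> K' * N" using \<open>1 \<le> K'\<close> \<open>2 \<le> N\<close> by simp
    then have "0 < 2 * K' * N + 1" by linarith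
    then show ?thesis using z by (simp add: d_def N_def)
  qed
  also have "\<dots> = (2 * K' + X + 2 * X * K' * N) * (N * r) - d" by (simp add: algebra_simps)
  also have "\<dots> \<le> (4 * X * K' * N) * (N * r) - d"
  proof -
    have "X * K' * 2 \<le> X * K' * N" "X * 1 \<le> X * K'" "16 * K' \<le> X * K'"
      using \<open>16 \<le> X\<close> \<open>1 \<le> K'\<close> \<open>2 \<le> N\<close> by (intro mult_left_mono mult_right_mono; simp)+
    then have "2 * K' + X \<le> 2 * (X * K' * N)" using \<open>1 \<le> K'\<close> by linarith
    then have "2 * K' + X + 2 * X * K' * N \<le> 4 * X * K' * N" by (simp add: mult_ac)
    moreover have "0 \<le> N * r" using \<open>0 < r\<close> \<open>2 \<le> N\<close> by simp
    ultimately show ?thesis by (intro diff_right_mono mult_right_mono)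
  qed
  also have "\<dots> = 4 * X * K' * N ^ 2 * r - d" by (simp add: power2_eq_square algebra_simps)
  finally have sep: "2 * (real k * real (n - k) * (r + d)) < 4 * X * K' * N ^ 2 * r - d" .
  show ?thesis
  proof (rule higher_pderiv_nonzero_of_separation[OF roots \<open>F \<noteq> 0\<close> \<open>k \<le> n\<close> _ _ _ sep])
    fix j assume "j \<in> {1..k}"
    have "cmod (zs j - z) \<le> cmod (zs j - m) + cmod (z - m)"
      using norm_triangle_ineq4[of "zs j - m" "z - m"] by simp
    then show "cmod (zs j - z) \<le> r + d" using near[OF \<open>j \<in> {1..k}\<close>] by (simp add: d_def)
  next
    fix j assume "j \<in> {k+1..n}"
    have "cmod (zs j - m) - cmod (z - m) \<le> cmod (zs j - z)"
      using norm_triangle_ineq2[of "zs j - m" "z - m"] by simp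
    then show "4 * X * K' * N ^ 2 * r - d \<le> cmod (zs j - z)"
      using far[OF \<open>j \<in> {k+1..n}\<close>] by (simp add: d_def K'_def N_def)
  qed (use \<open>0 < r\<close> \<open>0 \<le> d\<close> in simp)
qed

lemma sum_higher_pderiv_ratio_lt:
  fixes F :: "complex poly" and zs :: "nat \<Rightarrow> complex"
  assumes roots: "F = smult (lead_coeff F) (\<Prod>i=1..n. [:- zs i, 1:])" and "F \<noteq> 0" and "k \<le> n"
    and "2 \<le> n" "0 < r" "1 \<le> K" "0 < X1" "16 \<le> X2"
    and hX1: "real (max 1 k) \<le> X1 * ln (1 + 1 / (8 * K))" and hX2: "2 * K * X1 \<le> X2"
    and near: "\<And>j. j \<in> {1..k} \<Longrightarrow> cmod (zs j - m) < r"
    and far: "\<And>j. j \<in> {k+1..n} \<Longrightarrow> 4 * X2 * real (max 1 k) * real n ^ 2 * r \<le> cmod (zs j - m)"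
  shows "(\<Sum>i = k+1..n. cmod (poly ((pderiv ^^ i) F) m * complex_of_real ((X1 * r) ^ (i - k)) * fact k
                              / (poly ((pderiv ^^ k) F) m * fact i))) < 1 / (2 * K)"
proof -
  define N where "N = real n"
  define K' where "K' = real (max 1 k)"
  define R where "R = 4 * X2 * K' * N ^ 2"
  have "2 \<le> N" "1 \<le> K'" using \<open>2 \<le> n\<close> by (auto simp: N_def K'_def)
  have "0 < X2" using \<open>16 \<le> X2\<close> by simp
  have R_ge: "8 * X2 * N \<le> R"
  proof -
    have "2 * 1 \<le> N * K'" using \<open>2 \<le> N\<close> \<open>1 \<le> K'\<close> by (intro mult_mono) auto
    then have "4 * X2 * N * 2 \<le> 4 * X2 * N * (N * K')"
      using \<open>0 < X2\<close> \<open>2 \<le> N\<close> by (intro mult_left_mono) auto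
    then show ?thesis by (simp add: R_def power2_eq_square mult_ac)
  qed
  have "0 < R" using R_ge \<open>0 < X2\<close> \<open>2 \<le> N\<close> by (smt (verit) mult_pos_pos)
  have sep: "4 * (real k * real (n - k) * r) \<le> R * r"
  proof -
    have "real k * real (n - k) \<le> K' * N"
      using real_mult_diff_le_max_mult[OF \<open>k \<le> n\<close>] by (simp add: K'_def N_def)
    also have "\<dots> \<le> X2 * K' * N ^ 2"
      using \<open>16 \<le> X2\<close> \<open>1 \<le> K'\<close> \<open>2 \<le> N\<close> mult_mono[of 1 X2 "K' * N" "K' * N ^ 2"]
      by (simp add: power2_eq_square mult_ac)
    finally show ?thesis using \<open>0 < r\<close> by (simp add: R_def mult_right_mono)
  qed
  have near_factor_bound: "(1 + r / (X1 * r)) ^ k \<le> 1 + 1 / (8 * K)"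
  proof -
    have "real k / X1 \<le> ln (1 + 1 / (8 * K))"
      using hX1 \<open>0 < X1\<close> by (simp add: pos_divide_le_eq mult.commute)
    then have "exp (real k * (1 / X1)) \<le> 1 + 1 / (8 * K)"
      using \<open>1 \<le> K\<close> by (simp add: ln_ge_iff[symmetric] add_pos_nonneg)
    moreover have "(1 + 1 / X1) ^ k \<le> exp (real k * (1 / X1))"
      using \<open>0 < X1\<close> by (intro one_plus_power_le_exp) simp
    ultimately show ?thesis using \<open>0 < r\<close> by simp
  qed
  have far_factor_bound: "(1 + X1 * r / (R * r)) ^ (n - k) - 1 \<le> 1 / (8 * K)"
  proof -
    have "real (n - k) * X1 \<le> N * (X2 / (2 * K))"
      using hX2 \<open>1 \<le> K\<close> \<open>0 < X1\<close> by (intro mult_mono) (auto simp: N_def field_simps)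
    also have "\<dots> \<le> R / (16 * K)"
      using R_ge \<open>1 \<le> K\<close> by (simp add: field_simps)
    finally have small: "real (n - k) * (X1 / R) \<le> 1 / (16 * K)"
      using \<open>0 < R\<close> \<open>1 \<le> K\<close> by (simp add: field_simps)
    moreover have "1 / (16 * K) \<le> 1/2" using \<open>1 \<le> K\<close> by simp
    ultimately have "real (n - k) * (X1 / R) \<le> 1/2" by linarith
    moreover have "0 \<le> X1 / R" using \<open>0 < X1\<close> \<open>0 < R\<close> by simp
    ultimately have "(1 + X1 / R) ^ (n - k) - 1 \<le> 2 * (real (n - k) * (X1 / R))"
      using one_plus_power_minus_one_le by blast
    then show ?thesis using small \<open>0 < r\<close> by simp
  qed
  have "(\<Sum>i = k+1..n. cmod (poly ((pderiv ^^ i) F) m * complex_of_real ((X1 * r) ^ (i - k)) * fact k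
                              / (poly ((pderiv ^^ k) F) m * fact i)))
        \<le> 2 * ((1 + r / (X1 * r)) ^ k * ((1 + X1 * r / (R * r)) ^ (n - k) - 1))"
    using near far \<open>0 < r\<close> \<open>0 < X1\<close> \<open>0 < R\<close> sep
    by (intro sum_higher_pderiv_ratio_le[OF roots \<open>F \<noteq> 0\<close> \<open>k \<le> n\<close>])
       (auto simp: R_def K'_def N_def less_imp_le)
  also have "\<dots> \<le> 2 * ((1 + 1 / (8 * K)) * (1 / (8 * K)))"
    using near_factor_bound far_factor_bound \<open>0 < X1\<close> \<open>0 < R\<close> \<open>0 < r\<close> \<open>1 \<le> K\<close>
    by (intro mult_left_mono mult_mono) (auto simp: one_le_power add_nonneg_nonneg)
  also have "\<dots> < 1 / (2 * K)" using \<open>1 \<le> K\<close> by (simp add: field_simps)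
  finally show ?thesis .
qed

theorem lemmaA1:
  fixes F :: "complex poly" and n k :: nat and zs :: "nat \<Rightarrow> complex"
    and K c1 c2 r :: real and m :: complex
  assumes deg: "degree F = n" and n2: "n \<ge> 2"
    and roots: "F = smult (lead_coeff F) (\<Prod>i=1..n. [:- zs i, 1:])"
    and kn: "k \<le> n" and K1: "K \<ge> 1"
    and hc2: "c2 * real n * ln ((1 + 2 * K) / (2 * K)) \<ge> c1 * real n"
    and hc1: "c1 * real n \<ge> real (max 1 k) / ln (1 + 1 / (8 * K))"
    and iso: "isolating F 1 (4 * c2 * real (max 1 k) * real n ^ 3) m r
                (image_mset zs (mset_set {1..k}))"
  shows "(\<forall>z \<in> ball m (c2 * real n ^ 2 * r). poly ((pderiv ^^ k) F) z \<noteq> 0) \<and>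
         (\<Sum>i = k+1..n. cmod (poly ((pderiv ^^ i) F) m * complex_of_real ((c1 * real n * r) ^ (i - k)) * fact k
                              / (poly ((pderiv ^^ k) F) m * fact i))) < 1 / (2 * K)"
proof -
  have "F \<noteq> 0" using deg n2 by auto
  have "0 < r" using iso by (simp add: isolating_def)
  have "1 \<le> real (max 1 k)" by simp
  note constants = scaling_constants_bounds[OF K1 this hc2 hc1]
  have near: "\<And>j. j \<in> {1..k} \<Longrightarrow> cmod (zs j - m) < r"
    using isolating_near_roots[OF iso] .
  have R_eq: "4 * c2 * real (max 1 k) * real n ^ 3 * r = 4 * (c2 * real n) * real (max 1 k) * real n ^ 2 * r"
    by (simp add: power2_eq_square power3_eq_cube mult_ac)
  have far: "4 * (c2 * real n) * real (max 1 k) * real n ^ 2 * r \<le> cmod (zs j - m)"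
    if "j \<in> {k+1..n}" for j
    using isolating_far_roots[OF roots \<open>F \<noteq> 0\<close> kn iso that] by (simp only: R_eq)
  show ?thesis
  proof (intro conjI ballI)
    fix z assume "z \<in> ball m (c2 * real n ^ 2 * r)"
    then have "cmod (z - m) < c2 * real n * real n * r"
      by (simp add: dist_norm norm_minus_commute power2_eq_square)
    with near far show "poly ((pderiv ^^ k) F) z \<noteq> 0"
      by (intro higher_pderiv_nonzero_in_disk[OF roots \<open>F \<noteq> 0\<close> kn n2 \<open>0 < r\<close> constants(4)])
  next
    show "(\<Sum>i = k+1..n. cmod (poly ((pderiv ^^ i) F) m * complex_of_real ((c1 * real n * r) ^ (i - k))
        * fact k / (poly ((pderiv ^^ k) F) m * fact i))) < 1 / (2 * K)"
      using near far
      by (intro sum_higher_pderiv_ratio_lt[OF roots \<open>F \<noteq> 0\<close> kn n2 \<open>0 < r\<close> K1 constants(1,4,2,3)])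
  qed
qed

end
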